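(* Let $\{|0\rangle,|1\rangle\}$ be an orthonormal basis of $\mathbb{C}^2$ and $\{|0'\rangle,|1'\rangle,|2'\rangle\}$ an orthonormal basis of $\mathbb{C}^3$. Consider in $\mathbb{C}^2\otimes\mathbb{C}^3$ the three states $$\tfrac{1}{\sqrt2}(|0\rangle|0'\rangle-|1\rangle|1'\rangle),\quad \tfrac{1}{\sqrt2}(|0\rangle|1'\rangle+|1\rangle|0'\rangle),\quad \tfrac{1}{\sqrt2}(|0\rangle|1'\rangle-|1\rangle|0'\rangle)$$ (i.e. the set $\{\tfrac{1}{\sqrt2}(|00'\rangle\pm|11'\rangle),\tfrac{1}{\sqrt2}(|01'\rangle\pm|10'\rangle)\}$ with the state $\tfrac{1}{\sqrt2}(|00'\rangle+|11'\rangle)$ removed). Then the orthogonal complement in $\mathbb{C}^2\otimes\mathbb{C}^3$ of the span of these three states does not contain three pairwise orthogonal maximally entangled states; hence these three states cannot be completed to an orthonormal basis of $\mathbb{C}^2\otimes\mathbb{C}^3$ consisting of maximally entangled states.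
   Context: A pure state of $\mathbb{C}^2\otimes\mathbb{C}^3$ is maximally entangled if it has two equal nonzero Schmidt coefficients, equivalently its reduced state on the qubit is the maximally mixed state $I/2$. *)

theory Defs
  imports "HOL-Analysis.Analysis"
begin

text \<open>A vector of C^2 (x) C^3 is modelled as its coefficient matrix complex ^ 3 ^ 2:
  psi $ i $ j is the coefficient of the product basis vector e_i (x) f_j
  with respect to the standard bases.\<close>

type_synonym qubit = "complex ^ 2"
type_synonym qutrit = "complex ^ 3"
type_synonym bistate = "complex ^ 3 ^ 2"

definition cinner :: "complex ^ 'n \<Rightarrow> complex ^ 'n \<Rightarrow> complex" where
  "cinner x y = (\<Sum>i\<in>UNIV. cnj (x $ i) * y $ i)"

definition binner :: "bistate \<Rightarrow> bistate \<Rightarrow> complex" where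
  "binner psi phi = (\<Sum>i\<in>UNIV. \<Sum>j\<in>UNIV. cnj (psi $ i $ j) * phi $ i $ j)"

definition tensor :: "qubit \<Rightarrow> qutrit \<Rightarrow> bistate" where
  "tensor a b = (\<chi> i j. a $ i * b $ j)"

definition bscale :: "complex \<Rightarrow> bistate \<Rightarrow> bistate" where
  "bscale c psi = (\<chi> i j. c * psi $ i $ j)"

definition onb2 :: "qubit \<Rightarrow> qubit \<Rightarrow> bool" where
  "onb2 e0 e1 \<longleftrightarrow> cinner e0 e0 = 1 \<and> cinner e1 e1 = 1 \<and> cinner e0 e1 = 0"

definition onb3 :: "qutrit \<Rightarrow> qutrit \<Rightarrow> qutrit \<Rightarrow> bool" where
  "onb3 f0 f1 f2 \<longleftrightarrow> cinner f0 f0 = 1 \<and> cinner f1 f1 = 1 \<and> cinner f2 f2 = 1 \<and>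
     cinner f0 f1 = 0 \<and> cinner f0 f2 = 0 \<and> cinner f1 f2 = 0"

text \<open>Reduced state on the qubit: partial trace over C^3 of |psi><psi|.\<close>
definition reduced :: "bistate \<Rightarrow> 2 \<Rightarrow> 2 \<Rightarrow> complex" where
  "reduced psi i k = (\<Sum>j\<in>UNIV. psi $ i $ j * cnj (psi $ k $ j))"

definition max_ent :: "bistate \<Rightarrow> bool" where
  "max_ent psi \<longleftrightarrow> (\<forall>i k. reduced psi i k = (if i = k then 1/2 else 0))"

end

theory Submission
  imports Defs
begin

text \<open>Write \<open>x\<^sub>u\<close> for the vector of \<open>\<complex>\<^sup>3\<close> obtained by pairing the qubit factor of
  \<open>x\<close> with \<open>u\<close>. Then \<open>binner (e \<otimes> f) x = \<langle>f, x\<^sub>e\<rangle>\<close>, and \<open>x\<close> is maximally entangled iff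
  \<open>\<langle>x\<^sub>u, x\<^sub>v\<rangle> = \<langle>v, u\<rangle>/2\<close>. Orthogonality to the three given states says that
  \<open>x\<^sub>e\<^sub>0 = a f\<^sub>0 + p f\<^sub>2\<close> and \<open>x\<^sub>e\<^sub>1 = a f\<^sub>1 + q f\<^sub>2\<close>; maximal entanglement gives
  \<open>|p| = |q|\<close> and \<open>p\<^sup>* q = 0\<close>, so \<open>p = q = 0\<close> and \<open>x\<close> is a multiple of the removed state
  \<open>(e\<^sub>0 f\<^sub>0 + e\<^sub>1 f\<^sub>1)/\<surd>2\<close>. Any two such states have inner product \<open>2 a\<^sup>* b \<noteq> 0\<close>,
  so the complement holds no two orthogonal maximally entangled states.\<close>

lemma sum_rotate3:
  "(\<Sum>a\<in>A. \<Sum>i\<in>B. \<Sum>k\<in>C. f a i k) = (\<Sum>i\<in>B. \<Sum>k\<in>C. \<Sum>a\<in>A. f a i k)"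
  by (subst sum.swap) (rule sum.cong[OF refl], rule sum.swap)

lemma sum_rotate4:
  "(\<Sum>a\<in>A. \<Sum>i\<in>B. \<Sum>k\<in>C. \<Sum>l\<in>D. f a i k l) = (\<Sum>i\<in>B. \<Sum>k\<in>C. \<Sum>l\<in>D. \<Sum>a\<in>A. f a i k l)"
  by (subst sum_rotate3) (rule sum.cong[OF refl], rule sum.cong[OF refl], rule sum.swap)

lemma cinner_commute: "cinner y x = cnj (cinner x y)"
  by (simp add: cinner_def mult.commute)

lemma orthonormal_basis_completeness:
  fixes g :: "'n::finite \<Rightarrow> complex ^ 'n"
  assumes orthonormal: "\<And>a b. cinner (g a) (g b) = (if a = b then 1 else 0)"
  shows "(\<Sum>a\<in>UNIV. g a $ i * cnj (g a $ k)) = (if i = k then 1 else 0)"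
proof -
  define A :: "complex ^ 'n ^ 'n" where "A = (\<chi> a i. cnj (g a $ i))"
  define B :: "complex ^ 'n ^ 'n" where "B = (\<chi> i a. g a $ i)"
  have "A ** B = mat 1"
    using orthonormal by (simp add: vec_eq_iff matrix_matrix_mult_def mat_def A_def B_def cinner_def)
  then have "B ** A = mat 1"
    using matrix_left_right_inverse by blast
  then have "(B ** A) $ i $ k = mat 1 $ i $ k"
    by simp
  then show ?thesis
    by (simp add: matrix_matrix_mult_def mat_def A_def B_def)
qed

lemma parseval_cinner:
  fixes g :: "'n::finite \<Rightarrow> complex ^ 'n"
  assumes orthonormal: "\<And>a b. cinner (g a) (g b) = (if a = b then 1 else 0)"
  shows "cinner r r' = (\<Sum>a\<in>UNIV. cnj (cinner (g a) r) * cinner (g a) r')"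
proof -
  have "(\<Sum>a\<in>UNIV. cnj (cinner (g a) r) * cinner (g a) r')
      = (\<Sum>a\<in>UNIV. \<Sum>i\<in>UNIV. \<Sum>k\<in>UNIV. cnj (r $ i) * r' $ k * (g a $ i * cnj (g a $ k)))"
    by (simp add: cinner_def sum_distrib_left sum_distrib_right mult_ac)
  also have "\<dots> = (\<Sum>i\<in>UNIV. \<Sum>k\<in>UNIV. cnj (r $ i) * r' $ k * (\<Sum>a\<in>UNIV. g a $ i * cnj (g a $ k)))"
    by (subst sum_rotate3) (simp add: sum_distrib_left)
  also have "\<dots> = cinner r r'"
    by (simp add: orthonormal_basis_completeness[OF orthonormal] cinner_def if_distrib cong: if_cong)
  finally show ?thesis by simp
qed

lemma onb3_parseval:
  assumes "onb3 f0 f1 f2"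
  shows "cinner r r' = cnj (cinner f0 r) * cinner f0 r' + cnj (cinner f1 r) * cinner f1 r'
                       + cnj (cinner f2 r) * cinner f2 r'"
proof -
  define g :: "3 \<Rightarrow> complex ^ 3" where "g = (\<lambda>b. if b = 1 then f0 else if b = 2 then f1 else f2)"
  have "cinner (g a) (g b) = (if a = b then 1 else 0)" for a b
    using assms exhaust_3[of a] exhaust_3[of b]
    by (auto simp: g_def onb3_def cinner_commute[of f1 f0] cinner_commute[of f2 f0]
        cinner_commute[of f2 f1])
  from parseval_cinner[OF this, of r r'] show ?thesis
    by (simp add: sum_3 g_def)
qed

text \<open>\<open>partial_inner x u\<close> is \<open>(\<langle>u| \<otimes> 1) x\<close>.\<close>

definition partial_inner :: "bistate \<Rightarrow> qubit \<Rightarrow> qutrit" where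
  "partial_inner x u = (\<chi> j. \<Sum>i\<in>UNIV. cnj (u $ i) * x $ i $ j)"

lemma binner_tensor_left: "binner (tensor e f) x = cinner f (partial_inner x e)"
  unfolding binner_def tensor_def cinner_def partial_inner_def
  by (simp add: sum_distrib_left mult_ac) (rule sum.swap)

lemma binner_bscale_diff: "binner (bscale c (p - q)) x = cnj c * (binner p x - binner q x)"
  by (simp add: binner_def bscale_def sum_subtractf sum_distrib_left algebra_simps)

lemma binner_bscale_add: "binner (bscale c (p + q)) x = cnj c * (binner p x + binner q x)"
  by (simp add: binner_def bscale_def sum.distrib sum_distrib_left algebra_simps)

lemma binner_eq_sum_partial_inner:
  fixes g :: "2 \<Rightarrow> qubit"
  assumes orthonormal: "\<And>a b. cinner (g a) (g b) = (if a = b then 1 else 0)"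
  shows "binner x y = (\<Sum>a\<in>UNIV. cinner (partial_inner x (g a)) (partial_inner y (g a)))"
proof -
  have "(\<Sum>a\<in>UNIV. cinner (partial_inner x (g a)) (partial_inner y (g a)))
      = (\<Sum>a\<in>UNIV. \<Sum>j\<in>UNIV. \<Sum>k\<in>UNIV. \<Sum>i\<in>UNIV.
           cnj (x $ i $ j) * y $ k $ j * (g a $ i * cnj (g a $ k)))"
    by (simp add: cinner_def partial_inner_def sum_distrib_left sum_distrib_right mult_ac)
  also have "\<dots> = (\<Sum>j\<in>UNIV. \<Sum>k\<in>UNIV. \<Sum>i\<in>UNIV.
           cnj (x $ i $ j) * y $ k $ j * (\<Sum>a\<in>UNIV. g a $ i * cnj (g a $ k)))"
    by (subst sum_rotate4) (simp add: sum_distrib_left)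
  also have "\<dots> = binner x y"
    by (simp add: orthonormal_basis_completeness[OF orthonormal] binner_def if_distrib cong: if_cong)
      (rule sum.swap)
  finally show ?thesis by simp
qed

lemma onb2_binner_expansion:
  assumes "onb2 e0 e1"
  shows "binner x y = cinner (partial_inner x e0) (partial_inner y e0)
                    + cinner (partial_inner x e1) (partial_inner y e1)"
proof -
  define g :: "2 \<Rightarrow> qubit" where "g = (\<lambda>b. if b = 1 then e0 else e1)"
  have "cinner (g a) (g b) = (if a = b then 1 else 0)" for a b
    using assms exhaust_2[of a] exhaust_2[of b]
    by (auto simp: g_def onb2_def cinner_commute[of e1 e0])
  from binner_eq_sum_partial_inner[OF this, of x y] show ?thesis
    by (simp add: sum_2 g_def)
qed

lemma max_ent_partial_inner:
  assumes "max_ent x"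
  shows "cinner (partial_inner x u) (partial_inner x v) = cinner v u / 2"
proof -
  have reduced_cnj: "(\<Sum>j\<in>UNIV. cnj (x $ i $ j) * x $ k $ j) = (if i = k then 1/2 else 0)" for i k
  proof -
    have "(\<Sum>j\<in>UNIV. cnj (x $ i $ j) * x $ k $ j) = cnj (reduced x i k)"
      by (simp add: reduced_def mult.commute)
    with assms show ?thesis
      by (simp add: max_ent_def)
  qed
  have "cinner (partial_inner x u) (partial_inner x v)
      = (\<Sum>j\<in>UNIV. \<Sum>k\<in>UNIV. \<Sum>i\<in>UNIV. u $ i * cnj (v $ k) * (cnj (x $ i $ j) * x $ k $ j))"
    by (simp add: cinner_def partial_inner_def sum_distrib_left sum_distrib_right mult_ac)
  also have "\<dots> = (\<Sum>k\<in>UNIV. \<Sum>i\<in>UNIV. u $ i * cnj (v $ k) * (\<Sum>j\<in>UNIV. cnj (x $ i $ j) * x $ k $ j))"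
    by (subst sum_rotate3) (simp add: sum_distrib_left)
  also have "\<dots> = (\<Sum>k\<in>UNIV. \<Sum>i\<in>UNIV. u $ i * cnj (v $ k) * (if i = k then 1/2 else 0))"
    by (simp only: reduced_cnj)
  also have "\<dots> = cinner v u / 2"
    by (simp add: cinner_def if_distrib sum_divide_distrib mult_ac cong: if_cong)
  finally show ?thesis .
qed

lemma orthogonal_complement_coordinates:
  assumes "c \<noteq> 0"
    and "binner (bscale c (tensor e0 f0 - tensor e1 f1)) x = 0"
    and "binner (bscale c (tensor e0 f1 + tensor e1 f0)) x = 0"
    and "binner (bscale c (tensor e0 f1 - tensor e1 f0)) x = 0"
  shows "cinner f1 (partial_inner x e0) = 0" and "cinner f0 (partial_inner x e1) = 0"
    and "cinner f1 (partial_inner x e1) = cinner f0 (partial_inner x e0)"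
  using assms by (simp_all add: binner_bscale_diff binner_bscale_add binner_tensor_left)

lemma max_ent_orthogonal_complement_coordinates:
  assumes onb: "onb2 e0 e1" "onb3 f0 f1 f2" and "max_ent x"
    and f1_e0: "cinner f1 (partial_inner x e0) = 0" and f0_e1: "cinner f0 (partial_inner x e1) = 0"
    and diag: "cinner f1 (partial_inner x e1) = cinner f0 (partial_inner x e0)"
  shows "cinner f2 (partial_inner x e0) = 0" and "cinner f2 (partial_inner x e1) = 0"
    and "cnj (cinner f0 (partial_inner x e0)) * cinner f0 (partial_inner x e0) = 1/2"
proof -
  define a where "a = cinner f0 (partial_inner x e0)"
  define p where "p = cinner f2 (partial_inner x e0)"
  define q where "q = cinner f2 (partial_inner x e1)"
  have gram: "cinner (partial_inner x u) (partial_inner x v) = cinner v u / 2" for u v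
    using \<open>max_ent x\<close> by (rule max_ent_partial_inner)
  have norm_e0: "cnj a * a + cnj p * p = 1/2"
    using gram[of e0 e0] onb3_parseval[OF onb(2), of "partial_inner x e0" "partial_inner x e0"]
      onb(1) f1_e0 by (simp add: onb2_def a_def p_def)
  have norm_e1: "cnj a * a + cnj q * q = 1/2"
    using gram[of e1 e1] onb3_parseval[OF onb(2), of "partial_inner x e1" "partial_inner x e1"]
      onb(1) f0_e1 diag by (simp add: onb2_def a_def q_def)
  have "cnj p * q = 0"
    using gram[of e0 e1] onb3_parseval[OF onb(2), of "partial_inner x e0" "partial_inner x e1"]
      onb(1) f1_e0 f0_e1 by (simp add: onb2_def cinner_commute[of e1 e0] p_def q_def)
  moreover have "cnj p * p = cnj q * q"
    using norm_e0 norm_e1 by (metis add_left_cancel)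
  ultimately have "p = 0" and "q = 0"
    by (metis mult_eq_0_iff complex_cnj_zero_iff)+
  then show "cinner f2 (partial_inner x e0) = 0" and "cinner f2 (partial_inner x e1) = 0"
    and "cnj (cinner f0 (partial_inner x e0)) * cinner f0 (partial_inner x e0) = 1/2"
    using norm_e0 by (simp_all add: a_def p_def q_def)
qed

lemma max_ent_orthogonal_complement_not_orthogonal:
  assumes onb: "onb2 e0 e1" "onb3 f0 f1 f2" and "max_ent x" "max_ent y" "c \<noteq> 0"
    and "\<forall>w\<in>{x, y}. binner (bscale c (tensor e0 f0 - tensor e1 f1)) w = 0
                   \<and> binner (bscale c (tensor e0 f1 + tensor e1 f0)) w = 0
                   \<and> binner (bscale c (tensor e0 f1 - tensor e1 f0)) w = 0"
  shows "binner x y \<noteq> 0"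
proof -
  note coords_x = orthogonal_complement_coordinates[of c e0 f0 e1 f1 x]
  note coords_y = orthogonal_complement_coordinates[of c e0 f0 e1 f1 y]
  note x_props = coords_x max_ent_orthogonal_complement_coordinates[OF onb \<open>max_ent x\<close> coords_x]
  note y_props = coords_y max_ent_orthogonal_complement_coordinates[OF onb \<open>max_ent y\<close> coords_y]
  define a where "a = cinner f0 (partial_inner x e0)"
  define b where "b = cinner f0 (partial_inner y e0)"
  have "binner x y = cinner (partial_inner x e0) (partial_inner y e0)
                   + cinner (partial_inner x e1) (partial_inner y e1)"
    using onb(1) by (rule onb2_binner_expansion)
  also have "\<dots> = 2 * (cnj a * b)"
    using onb3_parseval[OF onb(2), of "partial_inner x e0" "partial_inner y e0"]
      onb3_parseval[OF onb(2), of "partial_inner x e1" "partial_inner y e1"] x_props y_props assms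
    by (simp add: a_def b_def)
  finally have "binner x y = 2 * (cnj a * b)" .
  moreover have "a \<noteq> 0" and "b \<noteq> 0"
    using x_props y_props assms by (auto simp: a_def b_def)
  ultimately show ?thesis by simp
qed

theorem proposition3:
  fixes e0 e1 :: qubit and f0 f1 f2 :: qutrit
  assumes "onb2 e0 e1" and "onb3 f0 f1 f2"
  defines "s1 \<equiv> bscale (1 / sqrt 2) (tensor e0 f0 - tensor e1 f1)"
      and "s2 \<equiv> bscale (1 / sqrt 2) (tensor e0 f1 + tensor e1 f0)"
      and "s3 \<equiv> bscale (1 / sqrt 2) (tensor e0 f1 - tensor e1 f0)"
  shows "\<not> (\<exists>x y z. (\<forall>s\<in>{s1, s2, s3}. \<forall>w\<in>{x, y, z}. binner s w = 0)
                  \<and> max_ent x \<and> max_ent y \<and> max_ent z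
                  \<and> binner x y = 0 \<and> binner x z = 0 \<and> binner y z = 0)
       \<and> \<not> (\<exists>x y z. max_ent x \<and> max_ent y \<and> max_ent z \<and>
                  (\<forall>u\<in>{s1, s2, s3, x, y, z}. \<forall>v\<in>{s1, s2, s3, x, y, z}.
                     binner u v = (if u = v then 1 else 0))
                  \<and> card {s1, s2, s3, x, y, z} = 6)"
proof -
  have no_orthogonal_pair: "binner x y \<noteq> 0"
    if "max_ent x" "max_ent y" "\<forall>s\<in>{s1, s2, s3}. \<forall>w\<in>{x, y}. binner s w = 0" for x y
    using max_ent_orthogonal_complement_not_orthogonal[OF assms(1,2) that(1,2), of "1 / sqrt 2"]
      that(3) by (simp add: s1_def s2_def s3_def)
  have "\<not> (\<forall>u\<in>{s1, s2, s3, x, y, z}. \<forall>v\<in>{s1, s2, s3, x, y, z}.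
             binner u v = (if u = v then 1 else 0))"
    if "max_ent x" "max_ent y" "card {s1, s2, s3, x, y, z} = 6" for x y z
  proof -
    from \<open>card {s1, s2, s3, x, y, z} = 6\<close> have "distinct [s1, s2, s3, x, y, z]"
      by (intro card_distinct) simp
    then show ?thesis
      using no_orthogonal_pair[OF that(1,2)] by auto
  qed
  then show ?thesis
    using no_orthogonal_pair by blast
qed

end
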